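(* Let $T>0$, $N\ge1$, $p>1$, and let $F:[0,T]\times\mathbb{R}^N\to\mathbb{R}$ and $\delta>0$ be such that for a.e. $t$, $x\mapsto F(t,x)$ is continuously differentiable on $\{|x|\le\delta\}$. Assume: (H1) there exist constants $q_1>p^2$, $q_2\in(p^2,q_1)$, $M_1>0$, $M_2>0$ with $M_1|x|^{q_1}\le F(t,x)\le M_2|x|^{q_2}$ for all $|x|\le\delta$ and a.e. $t\in[0,T]$; (H2) there is $\beta>p^2$ with $0\le\beta F(t,x)\le(\nabla F(t,x),x)$ for all $|x|\le\delta$ and a.e. $t\in[0,T]$. Let $m\in C^1(\mathbb{R},[0,1])$ be even with $sm'(s)\le0$ for all $s$, $m(s)=1$ for $|s|\le\delta/2$ and $m(s)=0$ for $|s|\ge\delta$, and define $\bar F(t,x)=m(|x|)F(t,x)+(1-m(|x|))M_2|x|^{q_2}$. Let $\theta=\min\{q_2,\beta\}$. Then, for a.e. $t\in[0,T]$: (i) $0\le\bar F(t,x)\le M_2|x|^{q_2}$ for all $x\in\mathbb{R}^N$; (ii) $0<\theta\bar F(t,x)\le(\nabla\bar F(t,x),x)$ for all $x\in\mathbb{R}^N\setminus\{0\}$.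
   Context: $\nabla$ denotes the gradient in $x\in\mathbb{R}^N$ and $(\cdot,\cdot)$ the Euclidean inner product. *)

theory Defs
  imports "HOL-Analysis.Analysis"
begin

definition Fbar :: "(real \<Rightarrow> real) \<Rightarrow> real \<Rightarrow> real \<Rightarrow> (real \<Rightarrow> 'a::euclidean_space \<Rightarrow> real)
    \<Rightarrow> real \<Rightarrow> 'a \<Rightarrow> real" where
  "Fbar m M2 q2 F t x = m (norm x) * F t x + (1 - m (norm x)) * M2 * norm x powr q2"

end

theory Submission
  imports Defs
begin

text \<open>Away from the origin \<open>Fbar\<close> is differentiable: the cut-off \<open>m (norm x) * F t x\<close> vanishes
  together with its derivative on \<open>norm x \<ge> \<delta>\<close>, so it glues with zero across the sphere.
  Writing \<open>a = F t x\<close>, \<open>A = M2 * norm x powr q2\<close> and \<open>\<mu> = m (norm x)\<close>, one has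
  \<open>Fbar = \<mu> a + (1 - \<mu>) A\<close> with \<open>0 \<le> a \<le> A\<close>, which gives the bounds, and
  \<open>\<nabla>Fbar \<bullet> x = \<mu> (\<nabla>F \<bullet> x) + (1 - \<mu>) q2 A + norm x m'(norm x) (a - A)\<close>.
  The last term is nonnegative because \<open>m\<close> is nonincreasing on \<open>[0, \<infinity>)\<close> and \<open>a \<le> A\<close>,
  so the Ambrosetti--Rabinowitz inequality for \<open>F\<close> (constant \<open>\<beta>\<close>) and Euler's identity for
  \<open>norm x powr q2\<close> (constant \<open>q2\<close>) combine into one with constant \<open>min q2 \<beta>\<close>.\<close>

lemma DERIV_zero_at_zero_of_nonneg:
  fixes f :: "real \<Rightarrow> real"
  assumes "(f has_real_derivative d) (at s)" "\<And>y. 0 \<le> f y" "f s = 0"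
  shows "d = 0"
  by (rule DERIV_local_min[OF assms(1), of 1]) (use assms(2,3) in auto)

lemma has_derivative_glue_zero:
  assumes "closed S" "closed C" "S \<union> C = UNIV" "\<And>y. y \<in> C \<Longrightarrow> f y = 0"
    and "x \<in> S \<Longrightarrow> (f has_derivative f') (at x within S)"
    and "x \<in> C \<Longrightarrow> f' = (\<lambda>_. 0)"
  shows "(f has_derivative f') (at x)"
proof -
  have on_C: "(f has_derivative f') (at x within C)" if "x \<in> C"
    by (rule has_derivative_transform_within[of "\<lambda>_. 0" _ _ _ 1]) (use assms(4,6) that in auto)
  consider "x \<in> S \<inter> C" | "x \<in> S - C" | "x \<in> C - S"
    using assms(3) by blast
  then show ?thesis
  proof cases
    case 1
    then have "(f has_derivative f') (at x within S \<union> C)"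
      using assms(5) on_C unfolding has_derivative_within by (auto intro: Lim_Un)
    then show ?thesis
      by (simp add: assms(3))
  next
    case 2
    then have "at x within S = at x"
      using assms(2,3) by (intro at_within_open_subset[of x "- C"]) auto
    then show ?thesis
      using 2 assms(5) by simp
  next
    case 3
    then have "at x within C = at x"
      using assms(1,3) by (intro at_within_open_subset[of x "- S"]) auto
    then show ?thesis
      using 3 on_C by simp
  qed
qed

lemma has_derivative_norm_comp:
  fixes x :: "'a::real_inner"
  assumes "(f has_real_derivative d) (at (norm x))" "x \<noteq> 0"
  shows "((\<lambda>y. f (norm y)) has_derivative (\<lambda>h. d * (sgn x \<bullet> h))) (at x)"
proof -
  have "(norm has_derivative (\<lambda>h. sgn x \<bullet> h)) (at x)"
    using has_derivative_norm[OF assms(2)] by (simp add: inner_commute)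
  from has_derivative_compose[OF this assms(1)[unfolded has_field_derivative_def]]
  show ?thesis
    by (simp add: o_def)
qed

lemma has_derivative_norm_powr:
  fixes x :: "'a::real_inner"
  assumes "x \<noteq> 0"
  shows "((\<lambda>y. norm y powr q) has_derivative (\<lambda>h. q * norm x powr (q - 1) * (sgn x \<bullet> h))) (at x)"
  by (rule has_derivative_norm_comp) (use assms in \<open>auto intro!: derivative_eq_intros\<close>)

lemma inner_sgn_self: "sgn x \<bullet> x = norm (x :: 'a::real_inner)"
  by (cases "x = 0") (simp_all add: sgn_div_norm dot_square_norm power2_eq_square)

text \<open>For \<open>norm x \<ge> \<delta>\<close> the junk values of \<open>f\<close> and \<open>g\<close>
  are harmless, since \<open>m\<close> and \<open>m'\<close> vanish there.\<close>

definition Fbar_grad :: "(real \<Rightarrow> real) \<Rightarrow> (real \<Rightarrow> real) \<Rightarrow> real \<Rightarrow> real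
    \<Rightarrow> ('a::real_inner \<Rightarrow> real) \<Rightarrow> ('a \<Rightarrow> 'a) \<Rightarrow> 'a \<Rightarrow> 'a" where
  "Fbar_grad m m' M2 q2 f g x = m (norm x) *\<^sub>R g x
     + (m' (norm x) * (f x - M2 * norm x powr q2)
        + (1 - m (norm x)) * M2 * q2 * norm x powr (q2 - 1)) *\<^sub>R sgn x"

lemma inner_Fbar_grad_self:
  assumes "x \<noteq> 0"
  shows "Fbar_grad m m' M2 q2 f g x \<bullet> x =
    m (norm x) * (g x \<bullet> x) + m' (norm x) * norm x * (f x - M2 * norm x powr q2)
      + (1 - m (norm x)) * q2 * (M2 * norm x powr q2)"
proof -
  have "norm x powr (q2 - 1) * norm x = norm x powr q2"
    using assms by (simp add: powr_diff)
  then show ?thesis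
    by (simp add: Fbar_grad_def inner_add_left inner_sgn_self algebra_simps)
qed

lemma has_derivative_Fbar:
  fixes F :: "real \<Rightarrow> 'a::euclidean_space \<Rightarrow> real"
  assumes x: "x \<noteq> 0"
    and F_deriv: "\<And>y. y \<in> cball 0 \<delta> \<Longrightarrow> (F t has_derivative (\<lambda>h. g y \<bullet> h)) (at y within cball 0 \<delta>)"
    and m_deriv: "\<And>s. (m has_real_derivative m' s) (at s)"
    and m_nonneg: "\<And>s. 0 \<le> m s"
    and m_zero: "\<And>s. \<delta> \<le> \<bar>s\<bar> \<Longrightarrow> m s = 0"
  shows "(Fbar m M2 q2 F t has_derivative (\<lambda>h. Fbar_grad m m' M2 q2 (F t) g x \<bullet> h)) (at x)"
proof -
  define s where "s = norm x"
  have dm: "((\<lambda>y. m (norm y)) has_derivative (\<lambda>h. m' s * (sgn x \<bullet> h))) (at x)"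
    unfolding s_def by (rule has_derivative_norm_comp[OF m_deriv x])
  have cutoff: "((\<lambda>y. m (norm y) * F t y) has_derivative
                  (\<lambda>h. (m s *\<^sub>R g x + (m' s * F t x) *\<^sub>R sgn x) \<bullet> h)) (at x)"
  proof (rule has_derivative_glue_zero[of "cball 0 \<delta>" "{y. \<delta> \<le> norm y}"])
    assume "x \<in> cball 0 \<delta>"
    from has_derivative_mult[OF has_derivative_at_withinI[OF dm] F_deriv[OF this]]
    show "((\<lambda>y. m (norm y) * F t y) has_derivative
            (\<lambda>h. (m s *\<^sub>R g x + (m' s * F t x) *\<^sub>R sgn x) \<bullet> h)) (at x within cball 0 \<delta>)"
      by (rule has_derivative_eq_rhs) (auto simp: s_def algebra_simps inner_add_left)
  next
    assume "x \<in> {y. \<delta> \<le> norm y}"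
    then have "m s = 0" "m' s = 0"
      using m_zero DERIV_zero_at_zero_of_nonneg[OF m_deriv m_nonneg] by (auto simp: s_def)
    then show "(\<lambda>h. (m s *\<^sub>R g x + (m' s * F t x) *\<^sub>R sgn x) \<bullet> h) = (\<lambda>_. 0)"
      by simp
  qed (use m_zero in \<open>auto intro!: closed_Collect_le continuous_on_const continuous_on_norm_id\<close>)
  have tail: "((\<lambda>y. (1 - m (norm y)) * M2 * norm y powr q2) has_derivative
                (\<lambda>h. (1 - m s) * M2 * (q2 * s powr (q2 - 1) * (sgn x \<bullet> h))
                      - m' s * (sgn x \<bullet> h) * M2 * s powr q2)) (at x)"
    using has_derivative_mult[OF has_derivative_mult[OF has_derivative_diff[OF has_derivative_const dm]
                                                       has_derivative_const[of M2]]
                             has_derivative_norm_powr[OF x, of q2]]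
    by (rule has_derivative_eq_rhs) (auto simp: s_def algebra_simps)
  have "Fbar m M2 q2 F t = (\<lambda>y. m (norm y) * F t y + (1 - m (norm y)) * M2 * norm y powr q2)"
    by (rule ext) (simp add: Fbar_def)
  moreover have "(\<lambda>h. (m s *\<^sub>R g x + (m' s * F t x) *\<^sub>R sgn x) \<bullet> h
                   + ((1 - m s) * M2 * (q2 * s powr (q2 - 1) * (sgn x \<bullet> h))
                      - m' s * (sgn x \<bullet> h) * M2 * s powr q2))
                = (\<lambda>h. Fbar_grad m m' M2 q2 (F t) g x \<bullet> h)"
    by (rule ext) (simp add: Fbar_grad_def s_def inner_add_left algebra_simps)
  ultimately show ?thesis
    using has_derivative_add[OF cutoff tail] by simp
qed

lemma convex_combination_euler_ineq:
  fixes \<mu> \<nu> a A b \<theta> \<beta> q :: real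
  assumes "0 \<le> \<mu>" "\<mu> \<le> 1" "\<nu> \<le> 0" "0 \<le> a" "a \<le> A" "\<beta> * a \<le> b"
    and "0 \<le> \<theta>" "\<theta> \<le> \<beta>" "\<theta> \<le> q"
  shows "\<theta> * (\<mu> * a + (1 - \<mu>) * A) \<le> \<mu> * b + \<nu> * (a - A) + (1 - \<mu>) * q * A"
proof -
  have "\<theta> * a \<le> b"
    using assms(4,6,8) mult_right_mono[of \<theta> \<beta> a] by linarith
  then have "\<theta> * (\<mu> * a) \<le> \<mu> * b"
    using assms(1) by (metis mult.left_commute mult_left_mono)
  moreover have "\<theta> * ((1 - \<mu>) * A) \<le> (1 - \<mu>) * q * A"
    using mult_right_mono[OF assms(9), of "(1 - \<mu>) * A"] assms(2,4,5) by (simp add: mult_ac)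
  moreover have "0 \<le> \<nu> * (a - A)"
    using assms(3,5) by (simp add: mult_nonpos_nonpos)
  ultimately show ?thesis
    by (simp add: algebra_simps)
qed

lemma Fbar_bounds:
  assumes m_range: "\<And>s. 0 \<le> m s \<and> m s \<le> 1"
    and m_zero: "\<And>s. \<delta> \<le> \<bar>s\<bar> \<Longrightarrow> m s = 0"
    and F_bounds: "\<And>x. norm x \<le> \<delta> \<Longrightarrow> 0 \<le> F t x \<and> F t x \<le> M2 * norm x powr q2"
    and M2: "0 \<le> M2"
  shows "0 \<le> Fbar m M2 q2 F t x \<and> Fbar m M2 q2 F t x \<le> M2 * norm x powr q2"
proof (cases "norm x \<le> \<delta>")
  case True
  have "m (norm x) * F t x + (1 - m (norm x)) * (M2 * norm x powr q2) \<le> M2 * norm x powr q2"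
    using F_bounds[OF True] m_range by (intro convex_bound_le) auto
  then show ?thesis
    using F_bounds[OF True] m_range M2 by (simp add: Fbar_def mult.assoc)
next
  case False
  then show ?thesis
    using m_zero[of "norm x"] M2 by (simp add: Fbar_def)
qed

lemma Fbar_pos:
  assumes "x \<noteq> 0"
    and m_range: "\<And>s. 0 \<le> m s \<and> m s \<le> 1"
    and m_zero: "\<And>s. \<delta> \<le> \<bar>s\<bar> \<Longrightarrow> m s = 0"
    and F_pos: "\<And>x. x \<noteq> 0 \<Longrightarrow> norm x \<le> \<delta> \<Longrightarrow> 0 < F t x"
    and M2: "0 < M2"
  shows "0 < Fbar m M2 q2 F t x"
proof -
  have A: "0 < M2 * norm x powr q2"
    using assms(1) M2 by simp
  show ?thesis
  proof (cases "norm x \<le> \<delta>")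
    case True
    have "0 < m (norm x) * F t x + (1 - m (norm x)) * (M2 * norm x powr q2)"
    proof (cases "m (norm x) = 0")
      case False
      then have "0 < m (norm x) * F t x"
        using F_pos[OF assms(1) True] m_range by (simp add: order.strict_iff_order)
      then show ?thesis
        using A m_range by (intro add_pos_nonneg) auto
    qed (use A in simp)
    then show ?thesis
      by (simp add: Fbar_def mult.assoc)
  next
    case False
    then show ?thesis
      using m_zero[of "norm x"] A by (simp add: Fbar_def)
  qed
qed

lemma Fbar_euler_ineq:
  assumes x: "x \<noteq> 0"
    and \<theta>: "0 \<le> \<theta>" "\<theta> \<le> \<beta>" "\<theta> \<le> q2"
    and m_deriv: "\<And>s. (m has_real_derivative m' s) (at s)"
    and m_range: "\<And>s. 0 \<le> m s \<and> m s \<le> 1"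
    and m_mono: "\<And>s. s * m' s \<le> 0"
    and m_zero: "\<And>s. \<delta> \<le> \<bar>s\<bar> \<Longrightarrow> m s = 0"
    and F_bounds: "\<And>x. norm x \<le> \<delta> \<Longrightarrow> 0 \<le> F t x \<and> F t x \<le> M2 * norm x powr q2"
    and F_AR: "\<And>x. norm x \<le> \<delta> \<Longrightarrow> \<beta> * F t x \<le> g x \<bullet> x"
    and M2: "0 \<le> M2"
  shows "\<theta> * Fbar m M2 q2 F t x \<le> Fbar_grad m m' M2 q2 (F t) g x \<bullet> x"
proof (cases "norm x \<le> \<delta>")
  case True
  have "\<theta> * (m (norm x) * F t x + (1 - m (norm x)) * (M2 * norm x powr q2))
        \<le> m (norm x) * (g x \<bullet> x) + m' (norm x) * norm x * (F t x - M2 * norm x powr q2)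
           + (1 - m (norm x)) * q2 * (M2 * norm x powr q2)"
    using m_range F_bounds[OF True] F_AR[OF True] m_mono[of "norm x"] \<theta>
    by (intro convex_combination_euler_ineq) (auto simp: mult.commute)
  then show ?thesis
    using x by (simp add: inner_Fbar_grad_self Fbar_def mult.assoc)
next
  case False
  then have "m (norm x) = 0" "m' (norm x) = 0"
    using m_zero DERIV_zero_at_zero_of_nonneg[OF m_deriv] m_range by auto
  then show ?thesis
    using x \<theta> M2 by (simp add: inner_Fbar_grad_self Fbar_def mult_right_mono)
qed

lemma Fbar_bounds_and_AR:
  fixes F :: "real \<Rightarrow> 'a::euclidean_space \<Rightarrow> real"
  assumes M: "0 < M1" "0 < M2" and pos: "0 < q2" "0 < \<beta>"
    and F_deriv: "\<And>x. x \<in> cball 0 \<delta> \<Longrightarrow> (F t has_derivative (\<lambda>h. g x \<bullet> h)) (at x within cball 0 \<delta>)"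
    and H1: "\<And>x. norm x \<le> \<delta> \<Longrightarrow> M1 * norm x powr q1 \<le> F t x \<and> F t x \<le> M2 * norm x powr q2"
    and F_AR: "\<And>x. norm x \<le> \<delta> \<Longrightarrow> \<beta> * F t x \<le> g x \<bullet> x"
    and m_deriv: "\<And>s. (m has_real_derivative m' s) (at s)"
    and m_range: "\<And>s. 0 \<le> m s \<and> m s \<le> 1"
    and m_mono: "\<And>s. s * m' s \<le> 0"
    and m_zero: "\<And>s. \<delta> \<le> \<bar>s\<bar> \<Longrightarrow> m s = 0"
  shows "(\<forall>x. 0 \<le> Fbar m M2 q2 F t x \<and> Fbar m M2 q2 F t x \<le> M2 * norm x powr q2)
         \<and> (\<forall>x. x \<noteq> 0 \<longrightarrow> (\<exists>D. (Fbar m M2 q2 F t has_derivative (\<lambda>h. D \<bullet> h)) (at x)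
                 \<and> 0 < min q2 \<beta> * Fbar m M2 q2 F t x
                 \<and> min q2 \<beta> * Fbar m M2 q2 F t x \<le> D \<bullet> x))"
proof (intro conjI allI impI exI)
  have F_pos: "0 < F t x" if "x \<noteq> 0" "norm x \<le> \<delta>" for x
  proof -
    have "0 < M1 * norm x powr q1"
      using M(1) that(1) by simp
    then show ?thesis
      using H1[OF that(2)] by linarith
  qed
  have F_bounds: "0 \<le> F t x \<and> F t x \<le> M2 * norm x powr q2" if "norm x \<le> \<delta>" for x
    using H1[OF that] F_pos[OF _ that] by (cases "x = 0") (auto intro: less_imp_le)
  fix x :: 'a
  show "0 \<le> Fbar m M2 q2 F t x" "Fbar m M2 q2 F t x \<le> M2 * norm x powr q2"
    using Fbar_bounds[where F = F and t = t, OF m_range m_zero F_bounds] M(2) by simp_all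
  assume x: "x \<noteq> 0"
  show "(Fbar m M2 q2 F t has_derivative (\<lambda>h. Fbar_grad m m' M2 q2 (F t) g x \<bullet> h)) (at x)"
    using m_range by (intro has_derivative_Fbar[where F = F and t = t, OF x F_deriv m_deriv _ m_zero]) auto
  show "0 < min q2 \<beta> * Fbar m M2 q2 F t x"
    using Fbar_pos[where F = F and t = t, OF x m_range m_zero F_pos M(2)] pos by simp
  show "min q2 \<beta> * Fbar m M2 q2 F t x \<le> Fbar_grad m m' M2 q2 (F t) g x \<bullet> x"
    using pos M(2)
    by (intro Fbar_euler_ineq[where F = F and t = t, OF x _ _ _ m_deriv m_range m_mono m_zero F_bounds F_AR])
      auto
qed

theorem lemma3p1:
  fixes F :: "real \<Rightarrow> 'a::euclidean_space \<Rightarrow> real"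
    and gradF :: "real \<Rightarrow> 'a \<Rightarrow> 'a"
    and m m' :: "real \<Rightarrow> real"
    and T p \<delta> q1 q2 M1 M2 \<beta> :: real
  assumes T: "T > 0" and p: "p > 1" and \<delta>: "\<delta> > 0"
    and C1: "AE t in lebesgue. t \<in> {0..T} \<longrightarrow>
              (\<forall>x\<in>cball 0 \<delta>. (F t has_derivative (\<lambda>h. inner (gradF t x) h)) (at x within cball 0 \<delta>))
              \<and> continuous_on (cball 0 \<delta>) (gradF t)"
    and q: "q1 > p\<^sup>2" "p\<^sup>2 < q2" "q2 < q1" and M: "M1 > 0" "M2 > 0"
    and H1: "AE t in lebesgue. t \<in> {0..T} \<longrightarrow>
              (\<forall>x. norm x \<le> \<delta> \<longrightarrow> M1 * norm x powr q1 \<le> F t x \<and> F t x \<le> M2 * norm x powr q2)"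
    and \<beta>: "\<beta> > p\<^sup>2"
    and H2: "AE t in lebesgue. t \<in> {0..T} \<longrightarrow>
              (\<forall>x. norm x \<le> \<delta> \<longrightarrow> 0 \<le> \<beta> * F t x \<and> \<beta> * F t x \<le> inner (gradF t x) x)"
    and m_deriv: "\<And>s. (m has_real_derivative m' s) (at s)"
    and m'_cont: "continuous_on UNIV m'"
    and m_range: "\<And>s. 0 \<le> m s \<and> m s \<le> 1"
    and m_even: "\<And>s. m (- s) = m s"
    and m_mono: "\<And>s. s * m' s \<le> 0"
    and m_one: "\<And>s. \<bar>s\<bar> \<le> \<delta> / 2 \<Longrightarrow> m s = 1"
    and m_zero: "\<And>s. \<bar>s\<bar> \<ge> \<delta> \<Longrightarrow> m s = 0"
  shows "AE t in lebesgue. t \<in> {0..T} \<longrightarrow>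
           (\<forall>x. 0 \<le> Fbar m M2 q2 F t x \<and> Fbar m M2 q2 F t x \<le> M2 * norm x powr q2)
         \<and> (\<forall>x. x \<noteq> 0 \<longrightarrow> (\<exists>D. (Fbar m M2 q2 F t has_derivative (\<lambda>h. inner D h)) (at x)
                 \<and> 0 < min q2 \<beta> * Fbar m M2 q2 F t x
                 \<and> min q2 \<beta> * Fbar m M2 q2 F t x \<le> inner D x))"
proof -
  have "0 < p\<^sup>2"
    using p by simp
  then have pos: "0 < q2" "0 < \<beta>"
    using q \<beta> by linarith+
  show ?thesis
    using C1 H1 H2
  proof eventually_elim
    case (elim t)
    show ?case
      using elim
      by (intro impI Fbar_bounds_and_AR[where F = F and t = t and g = "gradF t", OF M pos _ _ _
            m_deriv m_range m_mono m_zero]) auto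
  qed
qed

end
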